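(* The class $\mathcal D$ of continua $X$ that are $d(X)$-Baire is a bloom class: if $X\in\mathcal D$ and $K\subset X$ is a subcontinuum, then the quotient $X/K$ is $d(X/K)$-Baire.
   Context: A continuum is a nondegenerate compact connected Hausdorff space. $d(X)$ is the least cardinality of a dense subset of $X$; $X$ is $\alpha$-Baire if every family of $\alpha$ many open dense subsets has dense intersection. For a subcontinuum $K\subset X$, the $K$-bloom is the canonical quotient map $X\to X/K$ collapsing $K$ to a single point. A class of continua is a bloom class if it is closed under blooms. *)

theory Defs
  imports "HOL-Analysis.Analysis"
begin

definition continuum :: "'a topology \<Rightarrow> bool" where
  "continuum X \<longleftrightarrow> compact_space X \<and> connected_space X \<and> Hausdorff_space X \<and>
     (\<exists>x\<in>topspace X. \<exists>y\<in>topspace X. x \<noteq> y)"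

definition dense_in :: "'a topology \<Rightarrow> 'a set \<Rightarrow> bool" where
  "dense_in X D \<longleftrightarrow> D \<subseteq> topspace X \<and> X closure_of D = topspace X"

text \<open>D is a dense subset of least cardinality, so card_of D represents d(X).\<close>
definition min_dense :: "'a topology \<Rightarrow> 'a set \<Rightarrow> bool" where
  "min_dense X D \<longleftrightarrow> dense_in X D \<and> (\<forall>D'. dense_in X D' \<longrightarrow> (card_of D, card_of D') \<in> ordLeq)"

text \<open>X is alpha-Baire, where the cardinal alpha is given as the cardinality of the set A:
  every family of at most alpha many open dense sets has dense intersection.\<close>
definition alpha_Baire :: "'a topology \<Rightarrow> 'b set \<Rightarrow> bool" where
  "alpha_Baire X A \<longleftrightarrow>
     (\<forall>\<U>. (card_of \<U>, card_of A) \<in> ordLeq \<longrightarrow>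
        (\<forall>U\<in>\<U>. openin X U \<and> dense_in X U) \<longrightarrow>
        dense_in X (topspace X \<inter> \<Inter>\<U>))"

definition density_Baire :: "'a topology \<Rightarrow> bool" where
  "density_Baire X \<longleftrightarrow> (\<exists>D. min_dense X D \<and> alpha_Baire X D)"

text \<open>The K-bloom: quotient X/K, realised on equivalence classes (points {x} for x not in K,
  and the single point K).\<close>
definition bloom_class :: "'a set \<Rightarrow> 'a \<Rightarrow> 'a set" where
  "bloom_class K x = (if x \<in> K then K else {x})"

definition bloom :: "'a topology \<Rightarrow> 'a set \<Rightarrow> 'a set topology" where
  "bloom X K = topology (\<lambda>\<U>. \<U> \<subseteq> bloom_class K ` topspace X \<and> openin X (\<Union>\<U>))"

lemma istopology_bloom:
  "istopology (\<lambda>\<U>. \<U> \<subseteq> bloom_class K ` topspace X \<and> openin X (\<Union>\<U>))"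
  unfolding istopology_def
proof (rule conjI; intro allI impI)
  fix S T :: "'a set set"
  assume S: "S \<subseteq> bloom_class K ` topspace X \<and> openin X (\<Union>S)"
     and T: "T \<subseteq> bloom_class K ` topspace X \<and> openin X (\<Union>T)"
  have disj: "\<And>a b. a \<in> bloom_class K ` topspace X \<Longrightarrow> b \<in> bloom_class K ` topspace X \<Longrightarrow> a \<noteq> b \<Longrightarrow> a \<inter> b = {}"
    by (auto simp: bloom_class_def split: if_splits)
  have "\<Union>(S \<inter> T) = \<Union>S \<inter> \<Union>T"
  proof
    show "\<Union>S \<inter> \<Union>T \<subseteq> \<Union>(S \<inter> T)"
    proof
      fix x assume "x \<in> \<Union>S \<inter> \<Union>T"
      then obtain a b where "a \<in> S" "b \<in> T" "x \<in> a" "x \<in> b" by blast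
      with S T disj have "a = b" by blast
      with \<open>a \<in> S\<close> \<open>b \<in> T\<close> \<open>x \<in> a\<close> show "x \<in> \<Union>(S \<inter> T)" by blast
    qed
  qed blast
  then show "S \<inter> T \<subseteq> bloom_class K ` topspace X \<and> openin X (\<Union>(S \<inter> T))"
    using S T by auto
next
  fix \<K> :: "'a set set set"
  assume "\<forall>S\<in>\<K>. S \<subseteq> bloom_class K ` topspace X \<and> openin X (\<Union>S)"
  then show "\<Union>\<K> \<subseteq> bloom_class K ` topspace X \<and> openin X (\<Union>(\<Union>\<K>))"
  proof -
    have "\<Union>(\<Union>\<K>) = \<Union>((\<lambda>S. \<Union>S) ` \<K>)" by blast
    with \<open>\<forall>S\<in>\<K>. _\<close> show ?thesis
      by (metis (no_types, lifting) Sup_least imageE openin_Union)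
  qed
qed

end

theory Submission
  imports Defs
begin

text \<open>If the point K is isolated in X/K, every dense set
  contains it. Any other nonempty open set V of X/K has an open preimage meeting X - K. Given at
  most d(X) dense open sets U of X/K, the sets (preimage of U) \<union> interior K are dense open in
  X, the interior of K taking care of the open sets inside K; so their intersection meets the
  preimage of V outside K, and a point there is a singleton class lying in V and in every U.
  Since the quotient map sends dense sets to dense sets, d(X/K) \<le> d(X), and the Baire
  property passes to the smaller cardinal.\<close>

lemma dense_in_iff_meets_open:
  "dense_in X D \<longleftrightarrow> D \<subseteq> topspace X \<and> (\<forall>T. openin X T \<and> T \<noteq> {} \<longrightarrow> D \<inter> T \<noteq> {})"
  unfolding dense_in_def using dense_intersects_open by blast

lemma dense_in_meets_open:
  assumes "dense_in X D" and "openin X T" and "T \<noteq> {}"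
  shows "D \<inter> T \<noteq> {}"
  using assms unfolding dense_in_iff_meets_open by blast

lemma min_dense_exists: "\<exists>D. min_dense X D"
proof -
  let ?R = "card_of ` {D. dense_in X D}"
  have "dense_in X (topspace X)" unfolding dense_in_def by simp
  then have "?R \<noteq> {}" by blast
  moreover have "\<forall>r\<in>?R. Well_order r" using card_of_Well_order by blast
  ultimately obtain r where r: "r \<in> ?R" "\<forall>r'\<in>?R. (r, r') \<in> ordLeq"
    by (rule exists_minim_Well_order[THEN bexE])
  then obtain D where "dense_in X D" "r = card_of D" by blast
  with r(2) have "min_dense X D" unfolding min_dense_def by blast
  then show ?thesis by blast
qed

lemma min_dense_card_le:
  assumes "min_dense X D" and "dense_in X D'"
  shows "(card_of D, card_of D') \<in> ordLeq"
  using assms unfolding min_dense_def by blast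

lemma alpha_Baire_ordLeq:
  assumes "alpha_Baire X A" and "(card_of B, card_of A) \<in> ordLeq"
  shows "alpha_Baire X B"
  using assms ordLeq_transitive unfolding alpha_Baire_def by blast

lemma openin_bloom:
  "openin (bloom X K) V \<longleftrightarrow> V \<subseteq> bloom_class K ` topspace X \<and> openin X (\<Union>V)"
  unfolding bloom_def using istopology_bloom[of K X] topology_inverse' by metis

lemma topspace_bloom:
  assumes "K \<subseteq> topspace X"
  shows "topspace (bloom X K) = bloom_class K ` topspace X"
proof -
  have "\<Union>(bloom_class K ` topspace X) = topspace X"
    using assms by (auto simp: bloom_class_def)
  then have "openin (bloom X K) (bloom_class K ` topspace X)"
    unfolding openin_bloom by simp
  then show ?thesis
    using openin_subset openin_bloom[of X K "topspace (bloom X K)"] by blast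
qed

lemma singleton_in_bloom_classes_iff:
  assumes "V \<subseteq> bloom_class K ` S" and "y \<notin> K"
  shows "{y} \<in> V \<longleftrightarrow> y \<in> \<Union>V"
  using assms by (auto simp: bloom_class_def split: if_splits)

lemma openin_bloom_image_diff:
  assumes "closedin X K" and "openin X T"
  shows "openin (bloom X K) (bloom_class K ` (T - K))"
proof -
  have "\<Union>(bloom_class K ` (T - K)) = T - K" by (auto simp: bloom_class_def)
  then show ?thesis
    using assms openin_subset[OF assms(2)] by (auto simp: openin_bloom openin_diff)
qed

lemma dense_in_bloom_image:
  assumes "K \<subseteq> topspace X" and "dense_in X D"
  shows "dense_in (bloom X K) (bloom_class K ` D)"
  unfolding dense_in_iff_meets_open
proof (intro conjI allI impI)
  show "bloom_class K ` D \<subseteq> topspace (bloom X K)"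
    using assms by (auto simp: topspace_bloom dense_in_def)
next
  fix V assume V: "openin (bloom X K) V \<and> V \<noteq> {}"
  then have V_classes: "V \<subseteq> bloom_class K ` topspace X" and "openin X (\<Union>V)"
    by (simp_all add: openin_bloom)
  moreover have "\<Union>V \<noteq> {}"
    using V V_classes by (force simp: bloom_class_def)
  ultimately obtain d c where "d \<in> D" "c \<in> V" "d \<in> c"
    using assms(2) unfolding dense_in_iff_meets_open by blast
  moreover have "bloom_class K d = c"
    using \<open>c \<in> V\<close> \<open>d \<in> c\<close> V_classes by (auto simp: bloom_class_def split: if_splits)
  ultimately show "bloom_class K ` D \<inter> V \<noteq> {}" by blast
qed

lemma min_dense_bloom_card_le:
  assumes "K \<subseteq> topspace X" and "min_dense X D" and "min_dense (bloom X K) E"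
  shows "(card_of E, card_of D) \<in> ordLeq"
proof -
  have "dense_in X D" using assms(2) unfolding min_dense_def by blast
  then have "(card_of E, card_of (bloom_class K ` D)) \<in> ordLeq"
    using assms by (blast intro: min_dense_card_le dense_in_bloom_image)
  then show ?thesis using card_of_image ordLeq_transitive by blast
qed

lemma dense_in_bloom_preimage_Un_interior:
  assumes "closedin X K" and "openin (bloom X K) U" and "dense_in (bloom X K) U"
  shows "openin X (\<Union>U \<union> X interior_of K) \<and> dense_in X (\<Union>U \<union> X interior_of K)"
proof
  have "openin X (\<Union>U)" using assms(2) by (simp add: openin_bloom)
  then show open_pre: "openin X (\<Union>U \<union> X interior_of K)" by (simp add: openin_Un)
  show "dense_in X (\<Union>U \<union> X interior_of K)"
    unfolding dense_in_iff_meets_open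
  proof (intro conjI allI impI openin_subset[OF open_pre])
    fix T assume T: "openin X T \<and> T \<noteq> {}"
    show "(\<Union>U \<union> X interior_of K) \<inter> T \<noteq> {}"
    proof (cases "T \<subseteq> K")
      case True
      then show ?thesis using T interior_of_maximal by blast
    next
      case False
      then have "openin (bloom X K) (bloom_class K ` (T - K))" "bloom_class K ` (T - K) \<noteq> {}"
        using assms(1) T by (auto intro: openin_bloom_image_diff)
      then obtain z where "z \<in> T - K" "bloom_class K z \<in> U"
        using assms(3) unfolding dense_in_iff_meets_open by blast
      then have "z \<in> \<Union>U" by (auto simp: bloom_class_def)
      with \<open>z \<in> T - K\<close> show ?thesis by blast
    qed
  qed
qed

lemma openin_bloom_cases:
  assumes "closedin X K" and "openin (bloom X K) V" and "V \<noteq> {}"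
  obtains "V = {K}" | "openin X (\<Union>V - K)" and "\<Union>V - K \<noteq> {}"
proof (cases "\<Union>V - K = {}")
  case True
  have "V \<subseteq> bloom_class K ` topspace X" using assms(2) by (simp add: openin_bloom)
  with True have "V \<subseteq> {K}" by (force simp: bloom_class_def)
  with assms(3) show thesis using that(1) by blast
next
  case False
  moreover have "openin X (\<Union>V - K)" using assms(1,2) by (simp add: openin_bloom openin_diff)
  ultimately show thesis using that(2) by blast
qed

lemma alpha_Baire_bloom:
  assumes "closedin X K" and "alpha_Baire X A"
  shows "alpha_Baire (bloom X K) A"
  unfolding alpha_Baire_def
proof (intro allI impI)
  fix \<U> :: "'a set set set"
  assume card_\<U>: "(card_of \<U>, card_of A) \<in> ordLeq"
    and \<U>: "\<forall>U\<in>\<U>. openin (bloom X K) U \<and> dense_in (bloom X K) U"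
  show "dense_in (bloom X K) (topspace (bloom X K) \<inter> \<Inter>\<U>)"
    unfolding dense_in_iff_meets_open
  proof (intro conjI allI impI Int_lower1)
    fix V assume V: "openin (bloom X K) V \<and> V \<noteq> {}"
    then have V_sub: "V \<subseteq> topspace (bloom X K)" by (simp add: openin_subset)
    show "(topspace (bloom X K) \<inter> \<Inter>\<U>) \<inter> V \<noteq> {}"
    proof (rule openin_bloom_cases[OF assms(1) conjunct1[OF V] conjunct2[OF V]])
      assume "V = {K}"
      have "K \<in> U" if "U \<in> \<U>" for U
      proof -
        have "U \<inter> V \<noteq> {}" using \<U> that V dense_in_meets_open by blast
        with \<open>V = {K}\<close> show ?thesis by blast
      qed
      with \<open>V = {K}\<close> V_sub show ?thesis by blast
    next
      assume W: "openin X (\<Union>V - K)" "\<Union>V - K \<noteq> {}"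
      define pull where "pull U = \<Union>U \<union> X interior_of K" for U :: "'a set set"
      have "(card_of (pull ` \<U>), card_of A) \<in> ordLeq"
        using ordLeq_transitive[OF card_of_image card_\<U>] .
      moreover have "\<forall>W\<in>pull ` \<U>. openin X W \<and> dense_in X W"
        using \<U> assms(1) dense_in_bloom_preimage_Un_interior unfolding pull_def by blast
      ultimately have "dense_in X (topspace X \<inter> \<Inter>(pull ` \<U>))"
        by (rule assms(2)[unfolded alpha_Baire_def, THEN spec, THEN mp, THEN mp])
      then have "(topspace X \<inter> \<Inter>(pull ` \<U>)) \<inter> (\<Union>V - K) \<noteq> {}"
        using W by (rule dense_in_meets_open)
      then obtain y where y: "y \<in> \<Union>V - K" "\<forall>U\<in>\<U>. y \<in> pull U"
        by blast
      have "y \<notin> X interior_of K" using y(1) interior_of_subset by fastforce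
      then have "{y} \<in> U" if "U \<in> \<U>" for U
        using that y \<U> singleton_in_bloom_classes_iff[of U K "topspace X" y]
        unfolding pull_def by (auto simp: openin_bloom)
      moreover have "{y} \<in> V"
        using y V singleton_in_bloom_classes_iff[of V K "topspace X" y] by (auto simp: openin_bloom)
      ultimately show ?thesis using V_sub by blast
    qed
  qed
qed

lemma density_Baire_bloom:
  assumes "closedin X K" and "density_Baire X"
  shows "density_Baire (bloom X K)"
proof -
  obtain D where D: "min_dense X D" "alpha_Baire X D"
    using assms(2) unfolding density_Baire_def by blast
  obtain E where E: "min_dense (bloom X K) E" using min_dense_exists by blast
  have "(card_of E, card_of D) \<in> ordLeq"
    using min_dense_bloom_card_le[OF closedin_subset[OF assms(1)] D(1) E] .
  then have "alpha_Baire (bloom X K) E"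
    using alpha_Baire_ordLeq alpha_Baire_bloom[OF assms(1) D(2)] by blast
  with E show ?thesis unfolding density_Baire_def by blast
qed

theorem mainTheorem7:
  fixes X :: "'a topology" and K :: "'a set"
  assumes "continuum X"
    and "density_Baire X"
    and "K \<subseteq> topspace X"
    and "continuum (subtopology X K)"
  shows "density_Baire (bloom X K)"
proof -
  have "compactin X K"
    using assms(3,4) compactin_subspace unfolding continuum_def by blast
  moreover have "Hausdorff_space X" using assms(1) unfolding continuum_def by blast
  ultimately have "closedin X K" by (simp add: compactin_imp_closedin)
  then show ?thesis using assms(2) by (rule density_Baire_bloom)
qed

end
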